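(* If $M$ is a restricted Kripke model, $U$ is an atemporal action model over $L_{\mathsf{YDEL}}$, and $W^{M\oplus U}\neq\emptyset$, then $M\oplus U$ is a restricted Kripke model.
   Context: Fix a nonempty finite set $\mathsf{Agt}$ of agents and a nonempty set $\mathsf{Prop}$ of letters. A Kripke model is $M=(W^M,(\to^M_a)_a,\leadsto^M,V^M)$: nonempty $W^M$, binary relations $\to^M_a,\leadsto^M$ ($w'\leadsto w$: $w'$ is a yesterday of $w$), valuation $V^M:\mathsf{Prop}\to\mathcal P(W^M)$. A progression is a finite nonempty $x_0,\dots,x_n$ with $x_i\leadsto x_{i+1}$; a history is one not extendable at its beginning; $\mathrm{depth}(x)$ is the maximal length of a history ending at $x$ ($\infty$ if none). $M$ is restricted if: $w\leadsto w'$ implies $w\in V(p)\iff w'\in V(p)$ (persistence of facts); all depths finite; $w'\leadsto w\to_av$ implies $\exists v'\leadsto v$ (knowledge of the past); $w\to_av$ and no $w'\leadsto w$ imply no $v'\leadsto v$ (knowledge of initial time); $w'\leadsto w$, $w''\leadsto w$ imply $w'=w''$ (uniqueness of the past); $w\leadsto v\to_av'$ implies $\exists w'$ with $w\to_aw'\leadsto v'$ (perfect recall). An action model over a set of formulas $F$ is $U=(W^U,(\to^U_a)_a,\leadsto^U,\mathrm{pre}^U)$ with $W^U$ nonempty finite, binary relations, $\mathrm{pre}^U:W^U\to F$; atemporal means $\leadsto^U=\emptyset$. $L_{\mathsf{YDEL}}$: $\varphi::=p\mid\neg\varphi\mid\varphi\wedge\varphi\mid\Box_a\varphi\mid[Y]\varphi\mid[U,s]\varphi$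 with $(U,s)$ a pointed atemporal action model over $L_{\mathsf{YDEL}}$; the symbol $\flat$ is never a world or event. $\mathsf{YDEL}$ semantics on pointed restricted models: Boolean standard; $M,w\models_{\mathsf{YDEL}}\Box_a\varphi$ iff $\varphi$ holds at all $v$ with $w\to^M_av$; $M,w\models_{\mathsf{YDEL}}[Y]\varphi$ iff $\varphi$ holds at all $v\leadsto^Mw$; $M,w\models_{\mathsf{YDEL}}[U,s]\varphi$ iff $M,w\models_{\mathsf{YDEL}}\mathrm{pre}^U(s)$ implies $M\oplus U,(w,s)\models_{\mathsf{YDEL}}\varphi$, where $W^{M\oplus U}=(W^M\times\{\flat\})\cup\{(v,t)\in W^M\times W^U:M,v\models_{\mathsf{YDEL}}\mathrm{pre}^U(t)\}$; $(v,t)\to_a(v',t')$ iff ($t,t'\ne\flat$, $v\to^M_av'$, $t\to^U_at'$) or ($t=t'=\flat$, $v\to^M_av'$); $(v,t)\leadsto(v',t')$ iff ($t=\flat$, $t'\ne\flat$, $v=v'$) or ($t=t'=\flat$, $v\leadsto^Mv'$); $(v,t)\in V(p)$ iff $v\in V^M(p)$. *)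

theory Defs
  imports "HOL-Library.Extended_Nat"
begin

text \<open>A Kripke model over agents 'ag, letters 'p and worlds 'w.
  The pair (w', w) belongs to Y M iff w' is a yesterday of w (written w' \<leadsto> w).\<close>

record ('ag, 'p, 'w) kmodel =
  W :: "'w set"
  R :: "'ag \<Rightarrow> ('w \<times> 'w) set"
  Y :: "('w \<times> 'w) set"
  V :: "'p \<Rightarrow> 'w set"

definition kripke :: "('ag, 'p, 'w) kmodel \<Rightarrow> bool" where
  "kripke M \<longleftrightarrow> W M \<noteq> {} \<and> (\<forall>a. R M a \<subseteq> W M \<times> W M) \<and> Y M \<subseteq> W M \<times> W M
     \<and> (\<forall>p. V M p \<subseteq> W M)"

definition progression :: "('ag, 'p, 'w) kmodel \<Rightarrow> 'w list \<Rightarrow> bool" where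
  "progression M xs \<longleftrightarrow> xs \<noteq> [] \<and> set xs \<subseteq> W M
     \<and> (\<forall>i. Suc i < length xs \<longrightarrow> (xs ! i, xs ! Suc i) \<in> Y M)"

definition history :: "('ag, 'p, 'w) kmodel \<Rightarrow> 'w list \<Rightarrow> bool" where
  "history M xs \<longleftrightarrow> progression M xs \<and> \<not> (\<exists>w'. (w', hd xs) \<in> Y M)"

definition depth :: "('ag, 'p, 'w) kmodel \<Rightarrow> 'w \<Rightarrow> enat" where
  "depth M x = (let S = {length xs | xs. history M xs \<and> last xs = x} in
     if S \<noteq> {} \<and> finite S then enat (Max S) else \<infinity>)"

definition restricted :: "('ag, 'p, 'w) kmodel \<Rightarrow> bool" where
  "restricted M \<longleftrightarrow> kripke M
   \<and> (\<forall>w w' p. (w, w') \<in> Y M \<longrightarrow> (w \<in> V M p \<longleftrightarrow> w' \<in> V M p))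
   \<and> (\<forall>x \<in> W M. depth M x \<noteq> \<infinity>)
   \<and> (\<forall>w' w v a. (w', w) \<in> Y M \<and> (w, v) \<in> R M a \<longrightarrow> (\<exists>v'. (v', v) \<in> Y M))
   \<and> (\<forall>w v a. (w, v) \<in> R M a \<and> \<not> (\<exists>w'. (w', w) \<in> Y M) \<longrightarrow> \<not> (\<exists>v'. (v', v) \<in> Y M))
   \<and> (\<forall>w' w'' w. (w', w) \<in> Y M \<and> (w'', w) \<in> Y M \<longrightarrow> w' = w'')
   \<and> (\<forall>w v v' a. (w, v) \<in> Y M \<and> (v, v') \<in> R M a \<longrightarrow> (\<exists>w'. (w, w') \<in> R M a \<and> (w', v') \<in> Y M))"

text \<open>An (atemporal) action model has events {0..<length ps}, relations given by the
  first argument, and precondition of event t equal to ps ! t.  The yesterday relation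
  of an atemporal action model is empty, so it is not stored.\<close>

datatype ('ag, 'p) fm =
    Atom 'p
  | Neg "('ag, 'p) fm"
  | Conj "('ag, 'p) fm" "('ag, 'p) fm"
  | Box 'ag "('ag, 'p) fm"
  | Yest "('ag, 'p) fm"
  | Act "('ag, 'p) amodel" nat "('ag, 'p) fm"
and ('ag, 'p) amodel = AModel "'ag \<Rightarrow> (nat \<times> nat) set" "('ag, 'p) fm list"

fun evs :: "('ag, 'p) amodel \<Rightarrow> nat set" where
  "evs (AModel r ps) = {0..<length ps}"

fun arel :: "('ag, 'p) amodel \<Rightarrow> 'ag \<Rightarrow> (nat \<times> nat) set" where
  "arel (AModel r ps) = r"

fun pres :: "('ag, 'p) amodel \<Rightarrow> ('ag, 'p) fm list" where
  "pres (AModel r ps) = ps"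

fun wf_fm :: "('ag, 'p) fm \<Rightarrow> bool"
and wf_am :: "('ag, 'p) amodel \<Rightarrow> bool" where
  "wf_fm (Atom p) = True"
| "wf_fm (Neg f) = wf_fm f"
| "wf_fm (Conj f g) = (wf_fm f \<and> wf_fm g)"
| "wf_fm (Box a f) = wf_fm f"
| "wf_fm (Yest f) = wf_fm f"
| "wf_fm (Act U s f) = (wf_am U \<and> s \<in> evs U \<and> wf_fm f)"
| "wf_am (AModel r ps) = (ps \<noteq> [] \<and> (\<forall>a. r a \<subseteq> {0..<length ps} \<times> {0..<length ps})
      \<and> (\<forall>f \<in> set ps. wf_fm f))"

text \<open>Generic product update; None plays the role of the symbol \<flat>, the events are
  {0..<n}, and P v t says that the precondition of t holds at v.\<close>

definition updW :: "('ag, 'p, 'w) kmodel \<Rightarrow> nat \<Rightarrow> ('w \<Rightarrow> nat \<Rightarrow> bool) \<Rightarrow> ('w \<times> nat option) set" where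
  "updW M n P = (W M \<times> {None}) \<union> {(v, Some t) | v t. v \<in> W M \<and> t < n \<and> P v t}"

definition upd :: "('ag, 'p, 'w) kmodel \<Rightarrow> ('ag \<Rightarrow> (nat \<times> nat) set) \<Rightarrow> nat
    \<Rightarrow> ('w \<Rightarrow> nat \<Rightarrow> bool) \<Rightarrow> ('ag, 'p, 'w \<times> nat option) kmodel" where
  "upd M r n P = \<lparr> W = updW M n P,
     R = (\<lambda>a. {((v, t), (v', t')) | v t v' t'. (v, t) \<in> updW M n P \<and> (v', t') \<in> updW M n P \<and>
            ((\<exists>e e'. t = Some e \<and> t' = Some e' \<and> (v, v') \<in> R M a \<and> (e, e') \<in> r a)
             \<or> (t = None \<and> t' = None \<and> (v, v') \<in> R M a))}),
     Y = {((v, t), (v', t')) | v t v' t'. (v, t) \<in> updW M n P \<and> (v', t') \<in> updW M n P \<and>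
            ((t = None \<and> t' \<noteq> None \<and> v = v') \<or> (t = None \<and> t' = None \<and> (v, v') \<in> Y M))},
     V = (\<lambda>p. {(v, t). (v, t) \<in> updW M n P \<and> v \<in> V M p}) \<rparr>"

definition kmap :: "('w \<Rightarrow> 'u) \<Rightarrow> ('ag, 'p, 'w) kmodel \<Rightarrow> ('ag, 'p, 'u) kmodel" where
  "kmap f M = \<lparr> W = f ` W M, R = (\<lambda>a. map_prod f f ` R M a), Y = map_prod f f ` Y M,
                V = (\<lambda>p. f ` V M p) \<rparr>"

text \<open>To let the semantics live on a single world type, worlds of iterated updates are
  encoded as (x, [t1,...,tk]) instead of nested pairs (((x,t1),...),tk).\<close>

definition updE :: "('ag, 'p, 'w \<times> nat option list) kmodel \<Rightarrow> ('ag \<Rightarrow> (nat \<times> nat) set) \<Rightarrow> nat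
    \<Rightarrow> ('w \<times> nat option list \<Rightarrow> nat \<Rightarrow> bool) \<Rightarrow> ('ag, 'p, 'w \<times> nat option list) kmodel" where
  "updE M r n P = kmap (\<lambda>((x, xs), t). (x, xs @ [t])) (upd M r n P)"

lemma size_nth_le: "i < length ps \<Longrightarrow> size (ps ! i) \<le> size_list size ps"
  by (rule size_list_estimation'[OF nth_mem]) auto

function sat :: "('ag, 'p, 'w \<times> nat option list) kmodel \<Rightarrow> 'w \<times> nat option list
    \<Rightarrow> ('ag, 'p) fm \<Rightarrow> bool" where
  "sat M w (Atom p) = (w \<in> V M p)"
| "sat M w (Neg f) = (\<not> sat M w f)"
| "sat M w (Conj f g) = (sat M w f \<and> sat M w g)"
| "sat M w (Box a f) = (\<forall>v. (w, v) \<in> R M a \<longrightarrow> sat M v f)"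
| "sat M w (Yest f) = (\<forall>v. (v, w) \<in> Y M \<longrightarrow> sat M v f)"
| "sat M w (Act (AModel r ps) s f) =
     (if s < length ps then
        (sat M w (ps ! s) \<longrightarrow>
          sat (updE M r (length ps) (\<lambda>v t. if t < length ps then sat M v (ps ! t) else False))
              (fst w, snd w @ [Some s]) f)
      else True)"
  by pat_completeness auto
termination
  by (relation "measure (\<lambda>(M, w, f). size f)") (auto dest!: size_nth_le)

definition models :: "('ag, 'p, 'w) kmodel \<Rightarrow> 'w \<Rightarrow> ('ag, 'p) fm \<Rightarrow> bool" where
  "models M w f = sat (kmap (\<lambda>w. (w, [])) M) (w, []) f"

definition oplus :: "('ag, 'p, 'w) kmodel \<Rightarrow> ('ag, 'p) amodel \<Rightarrow> ('ag, 'p, 'w \<times> nat option) kmodel" where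
  "oplus M U = upd M (arel U) (length (pres U)) (\<lambda>v t. models M v (pres U ! t))"

end

theory Submission
  imports Defs
begin

text \<open>The worlds of the update are copies (v, \<flat>) of the worlds of M, which form an
  isomorphic copy of M, together with new worlds (v, t) whose unique yesterday is (v, \<flat>) and
  which are accessible only from new worlds. Each condition of restrictedness therefore splits
  into a case inherited from M and a case settled directly by the definition of the update. For
  finiteness of depth, a history of v lifted to the copy and extended by (v, t) is a history of
  (v, t); by uniqueness of the past, a world has at most one history, so this determines its depth.\<close>

lemma progression_snoc:
  assumes "xs \<noteq> []"
  shows "progression M (xs @ [x]) \<longleftrightarrow> progression M xs \<and> x \<in> W M \<and> (last xs, x) \<in> Y M"
  using assms unfolding progression_def
  by (auto simp: nth_append last_conv_nth less_Suc_eq split: if_splits) (metis diff_Suc_Suc minus_nat.diff_0)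

lemma history_singleton: "history M [x] \<longleftrightarrow> x \<in> W M \<and> \<not> (\<exists>w'. (w', x) \<in> Y M)"
  by (simp add: history_def progression_def)

lemma history_snoc:
  assumes "xs \<noteq> []"
  shows "history M (xs @ [x]) \<longleftrightarrow> history M xs \<and> x \<in> W M \<and> (last xs, x) \<in> Y M"
  using assms by (auto simp: history_def progression_snoc)

lemma history_unique:
  assumes unique_past: "\<forall>w' w'' w. (w', w) \<in> Y M \<and> (w'', w) \<in> Y M \<longrightarrow> w' = w''"
  shows "history M xs \<Longrightarrow> history M ys \<Longrightarrow> last xs = last ys \<Longrightarrow> xs = ys"
proof (induction xs arbitrary: ys rule: rev_induct)
  case Nil
  then show ?case by (simp add: history_def progression_def)
next
  case (snoc x xs)
  obtain ys' where ys: "ys = ys' @ [x]"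
    using snoc.prems(2,3) unfolding history_def progression_def
    by (metis append_butlast_last_id last_snoc)
  consider "xs = []" "ys' = []" | "xs \<noteq> []" "ys' \<noteq> []" | "xs = [] \<longleftrightarrow> ys' \<noteq> []"
    by blast
  then show ?case
  proof cases
    case 1
    then show ?thesis using ys by simp
  next
    case 2
    then have "history M xs" "history M ys'" "last xs = last ys'"
      using snoc.prems(1,2) unique_past ys by (auto simp: history_snoc)
    then show ?thesis using snoc.IH ys by blast
  next
    case 3
    then show ?thesis using snoc.prems(1,2) ys by (auto simp: history_snoc history_singleton)
  qed
qed

lemma depth_finite_iff_history:
  assumes "\<forall>w' w'' w. (w', w) \<in> Y M \<and> (w'', w) \<in> Y M \<longrightarrow> w' = w''"
  shows "depth M x \<noteq> \<infinity> \<longleftrightarrow> (\<exists>xs. history M xs \<and> last xs = x)"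
proof
  assume "depth M x \<noteq> \<infinity>"
  then show "\<exists>xs. history M xs \<and> last xs = x"
    unfolding depth_def Let_def by (auto split: if_splits)
next
  assume "\<exists>xs. history M xs \<and> last xs = x"
  then obtain xs where "history M xs" "last xs = x" by blast
  then have "{length ys | ys. history M ys \<and> last ys = x} = {length xs}"
    using history_unique[OF assms] by blast
  then show "depth M x \<noteq> \<infinity>" unfolding depth_def by simp
qed

lemma progression_map:
  assumes "progression M xs" "\<And>w. w \<in> W M \<Longrightarrow> f w \<in> W N"
    "\<And>u v. (u, v) \<in> Y M \<Longrightarrow> (f u, f v) \<in> Y N"
  shows "progression N (map f xs)"
  using assms unfolding progression_def by auto

lemma updW_None [simp]: "(v, None) \<in> updW M n P \<longleftrightarrow> v \<in> W M"
  by (auto simp: updW_def)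

lemma updW_Some [simp]: "(v, Some t) \<in> updW M n P \<longleftrightarrow> v \<in> W M \<and> t < n \<and> P v t"
  by (auto simp: updW_def)

lemma W_upd: "W (upd M r n P) = updW M n P"
  by (simp add: upd_def)

lemma Y_upd:
  "((v, t), (v', t')) \<in> Y (upd M r n P) \<longleftrightarrow> (v, t) \<in> updW M n P \<and> (v', t') \<in> updW M n P \<and>
     t = None \<and> ((t' \<noteq> None \<and> v = v') \<or> (t' = None \<and> (v, v') \<in> Y M))"
  by (auto simp: upd_def)

lemma R_upd:
  "((v, t), (v', t')) \<in> R (upd M r n P) a \<longleftrightarrow> (v, t) \<in> updW M n P \<and> (v', t') \<in> updW M n P \<and>
     (v, v') \<in> R M a \<and> ((\<exists>e e'. t = Some e \<and> t' = Some e' \<and> (e, e') \<in> r a) \<or> (t = None \<and> t' = None))"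
  by (auto simp: upd_def)

lemma V_upd: "(v, t) \<in> V (upd M r n P) p \<longleftrightarrow> (v, t) \<in> updW M n P \<and> v \<in> V M p"
  by (simp add: upd_def)

lemma kripke_upd:
  assumes "W M \<noteq> {}"
  shows "kripke (upd M r n P)"
proof -
  have "updW M n P \<noteq> {}"
    using assms by (auto simp: updW_def)
  then show ?thesis
    unfolding kripke_def by (auto simp: upd_def)
qed

lemma upd_persistence:
  assumes "\<forall>w w' p. (w, w') \<in> Y M \<longrightarrow> (w \<in> V M p \<longleftrightarrow> w' \<in> V M p)"
  shows "\<forall>w w' p. (w, w') \<in> Y (upd M r n P) \<longrightarrow> (w \<in> V (upd M r n P) p \<longleftrightarrow> w' \<in> V (upd M r n P) p)"
  using assms by (auto simp: Y_upd V_upd)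

lemma upd_unique_past:
  assumes "\<forall>w' w'' w. (w', w) \<in> Y M \<and> (w'', w) \<in> Y M \<longrightarrow> w' = w''"
  shows "\<forall>w' w'' w. (w', w) \<in> Y (upd M r n P) \<and> (w'', w) \<in> Y (upd M r n P) \<longrightarrow> w' = w''"
  using assms by (fastforce simp: Y_upd)

lemma upd_knowledge_of_past:
  assumes "kripke M"
    and "\<forall>w' w v a. (w', w) \<in> Y M \<and> (w, v) \<in> R M a \<longrightarrow> (\<exists>v'. (v', v) \<in> Y M)"
  shows "\<forall>w' w v a. (w', w) \<in> Y (upd M r n P) \<and> (w, v) \<in> R (upd M r n P) a
    \<longrightarrow> (\<exists>v'. (v', v) \<in> Y (upd M r n P))"
proof (intro allI impI)
  fix w' w v a
  assume "(w', w) \<in> Y (upd M r n P) \<and> (w, v) \<in> R (upd M r n P) a"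
  then obtain x' x t y s where
    w: "w' = (x', None)" "w = (x, t)" "v = (y, s)" and xy: "(x, y) \<in> R M a"
    and ts: "t = None \<longleftrightarrow> s = None" and past: "t = None \<Longrightarrow> (x', x) \<in> Y M"
    and v: "v \<in> updW M n P"
    by (cases w'; cases w; cases v) (auto simp: Y_upd R_upd)
  show "\<exists>v'. (v', v) \<in> Y (upd M r n P)"
  proof (cases t)
    case None
    then obtain y' where "(y', y) \<in> Y M"
      using assms(2) past xy by blast
    then show ?thesis
      using assms(1) ts None v w unfolding kripke_def
      by (intro exI[of _ "(y', None)"]) (auto simp: Y_upd)
  next
    case (Some e)
    then show ?thesis
      using ts v w by (intro exI[of _ "(y, None)"]) (cases s; auto simp: Y_upd)
  qed
qed

lemma upd_knowledge_of_initial_time: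
  assumes "kripke M"
    and "\<forall>w v a. (w, v) \<in> R M a \<and> \<not> (\<exists>w'. (w', w) \<in> Y M) \<longrightarrow> \<not> (\<exists>v'. (v', v) \<in> Y M)"
  shows "\<forall>w v a. (w, v) \<in> R (upd M r n P) a \<and> \<not> (\<exists>w'. (w', w) \<in> Y (upd M r n P))
    \<longrightarrow> \<not> (\<exists>v'. (v', v) \<in> Y (upd M r n P))"
proof (intro allI impI)
  fix w v a
  assume wv: "(w, v) \<in> R (upd M r n P) a \<and> \<not> (\<exists>w'. (w', w) \<in> Y (upd M r n P))"
  then obtain x t y s where w: "w = (x, t)" "v = (y, s)" "w \<in> updW M n P"
    and xy: "(x, y) \<in> R M a" and ts: "t = None \<longleftrightarrow> s = None"
    by (cases w; cases v) (auto simp: R_upd)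
  have "t = None"
    using wv w by (cases t) (auto simp: Y_upd)
  moreover have "\<not> (\<exists>x'. (x', x) \<in> Y M)"
    using wv w \<open>t = None\<close> assms(1) unfolding kripke_def by (auto simp: Y_upd)
  ultimately show "\<not> (\<exists>v'. (v', v) \<in> Y (upd M r n P))"
    using assms(2) xy ts w by (auto simp: Y_upd)
qed

lemma upd_perfect_recall:
  assumes "kripke M"
    and "\<forall>w v v' a. (w, v) \<in> Y M \<and> (v, v') \<in> R M a \<longrightarrow> (\<exists>w'. (w, w') \<in> R M a \<and> (w', v') \<in> Y M)"
  shows "\<forall>w v v' a. (w, v) \<in> Y (upd M r n P) \<and> (v, v') \<in> R (upd M r n P) a
    \<longrightarrow> (\<exists>w'. (w, w') \<in> R (upd M r n P) a \<and> (w', v') \<in> Y (upd M r n P))"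
proof (intro allI impI)
  fix w v v' a
  assume "(w, v) \<in> Y (upd M r n P) \<and> (v, v') \<in> R (upd M r n P) a"
  then obtain x y s z u where w: "w = (x, None)" "v = (y, s)" "v' = (z, u)"
    and yz: "(y, z) \<in> R M a" and su: "s = None \<longleftrightarrow> u = None" and v': "v' \<in> updW M n P"
    and past: "s = None \<Longrightarrow> (x, y) \<in> Y M" and now: "s \<noteq> None \<Longrightarrow> x = y"
    by (cases w; cases v; cases v') (auto simp: Y_upd R_upd)
  show "\<exists>w'. (w, w') \<in> R (upd M r n P) a \<and> (w', v') \<in> Y (upd M r n P)"
  proof (cases s)
    case None
    then obtain x' where "(x, x') \<in> R M a" "(x', z) \<in> Y M"
      using assms(2) past yz by blast
    then show ?thesis
      using assms(1) None su w unfolding kripke_def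
      by (intro exI[of _ "(x', None)"]) (auto simp: Y_upd R_upd)
  next
    case (Some e)
    then show ?thesis
      using assms(1) su now yz v' w unfolding kripke_def
      by (intro exI[of _ "(z, None)"]) (auto simp: Y_upd R_upd)
  qed
qed

lemma history_upd_None:
  assumes "kripke M" "history M xs"
  shows "history (upd M r n P) (map (\<lambda>w. (w, None)) xs)"
proof -
  have "progression (upd M r n P) (map (\<lambda>w. (w, None)) xs)"
    using assms unfolding history_def kripke_def
    by (intro progression_map) (auto simp: W_upd Y_upd)
  moreover have "xs \<noteq> []"
    using assms(2) by (simp add: history_def progression_def)
  ultimately show ?thesis
    using assms(2) unfolding history_def by (auto simp: hd_map Y_upd)
qed

lemma upd_depth_finite:
  assumes "kripke M"
    and unique_past: "\<forall>w' w'' w. (w', w) \<in> Y M \<and> (w'', w) \<in> Y M \<longrightarrow> w' = w''"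
    and "\<forall>x \<in> W M. depth M x \<noteq> \<infinity>"
  shows "\<forall>x \<in> W (upd M r n P). depth (upd M r n P) x \<noteq> \<infinity>"
proof
  fix w
  assume w: "w \<in> W (upd M r n P)"
  obtain v t where vt: "w = (v, t)" and v: "v \<in> W M"
    using w by (cases w; cases "snd w") (auto simp: W_upd)
  obtain xs where xs: "history M xs" "last xs = v"
    using assms(3) v depth_finite_iff_history[OF unique_past] by blast
  let ?hs = "map (\<lambda>w. (w, None)) xs"
  have hs: "history (upd M r n P) ?hs" "last ?hs = (v, None)" "?hs \<noteq> []"
    using history_upd_None[OF assms(1) xs(1)] xs by (auto simp: last_map history_def progression_def)
  have "\<exists>gs. history (upd M r n P) gs \<and> last gs = w"
  proof (cases t)
    case None
    then show ?thesis
      using hs vt by blast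
  next
    case (Some e)
    then have "(last ?hs, w) \<in> Y (upd M r n P)"
      using v w vt unfolding hs(2) by (simp add: W_upd Y_upd)
    then have "history (upd M r n P) (?hs @ [w])"
      using hs w by (simp add: history_snoc)
    then show ?thesis
      by (intro exI[of _ "?hs @ [w]"]) simp
  qed
  then show "depth (upd M r n P) w \<noteq> \<infinity>"
    using depth_finite_iff_history[OF upd_unique_past[OF unique_past]] by blast
qed

lemma restricted_upd:
  assumes "restricted M"
  shows "restricted (upd M r n P)"
proof -
  have "W M \<noteq> {}"
    using assms unfolding restricted_def kripke_def by blast
  then show ?thesis
    using assms unfolding restricted_def
    by (intro conjI kripke_upd upd_persistence upd_unique_past upd_depth_finite
        upd_knowledge_of_past upd_knowledge_of_initial_time upd_perfect_recall) blast+
qed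

theorem corollary32:
  fixes M :: "('ag :: finite, 'p, 'w) kmodel" and U :: "('ag, 'p) amodel"
  assumes "restricted M"
    and "wf_am U"
    and "W (oplus M U) \<noteq> {}"
  shows "restricted (oplus M U)"
  unfolding oplus_def using assms(1) by (rule restricted_upd)

end
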